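(* Let $\varphi(x)=a_nx^n+\cdots+a_1x+a_0\in\mathbb{C}[x]$ with $a_n\neq0$ have $n$ distinct roots $x_1,\dots,x_n$. Define numbers $b_{j,k}$ ($j=-1,0,\dots,n-1$, $k=0,\dots,n-1$) by $b_{-1,k}=0$, $$b_{n-i,0}=(n-(i-1))\,a_{n-(i-1)},\qquad i=1,\dots,n,$$ $$b_{n-i,k}=-\frac{a_{n-i}}{a_n}\,b_{n-1,k-1}+b_{n-(i+1),k-1},\qquad i=1,\dots,n,\ k=1,\dots,n-1.$$ Then the Newton sums $N_k=\sum_{i=1}^n x_i^k$ satisfy $$N_k=\frac{b_{n-1,k}}{a_n},\qquad k=0,1,\dots,n-1.$$
   Context: Equivalently, $b_{n-1,k}x^{n-1}+\cdots+b_{1,k}x+b_{0,k}$ is the unique polynomial of degree less than $n$ in the coset of $\varphi'(x)x^k$ in $R/(\varphi(x))$, where $R\subset\mathbb{C}(x)$ is the subring of rational functions $p/q$ ($p,q\in\mathbb{C}[x]$) with $q(x_i)\neq0$ at every root $x_i$ of $\varphi$, and $(\varphi(x))$ is the ideal of $R$ generated by $\varphi$. *)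

theory Defs
  imports "HOL-Computational_Algebra.Polynomial"
begin

text \<open>The numbers b_{j,k} of the paper, for p = a_n x^n + ... + a_0 with n = degree p.
  Indices j range over -1,0,...,n-1 (an int), k over nat.  b_{-1,k} = 0;
  for 0 <= j <= n-1 (i.e. j = n-i, i=1..n):
  b_{j,0} = (j+1) a_{j+1},  b_{j,k+1} = -(a_j/a_n) b_{n-1,k} + b_{j-1,k}.\<close>

fun bnum :: "complex poly \<Rightarrow> int \<Rightarrow> nat \<Rightarrow> complex" where
  "bnum p j 0 =
     (if 0 \<le> j \<and> j < int (degree p)
      then of_nat (nat j + 1) * coeff p (nat j + 1) else 0)"
| "bnum p j (Suc k) =
     (if 0 \<le> j \<and> j < int (degree p)
      then - (coeff p (nat j) / lead_coeff p) * bnum p (int (degree p) - 1) k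
           + bnum p (j - 1) k
      else 0)"

end

theory Submission
  imports Defs
begin

text \<open>Let \<open>B_k(x) = \<Sum>_{j<n} b_{j,k} x^j\<close>. Then \<open>B_0 = \<phi>'\<close> and
  \<open>B_{k+1} = x B_k - (b_{n-1,k}/a_n) \<phi>\<close>, hence \<open>B_k(x_i) = x_i^k \<phi>'(x_i)\<close> at every root.
  The polynomial \<open>\<Sum>_i x_i^k \<phi>(x)/(x - x_i)\<close> has the same values at the roots (its \<open>i\<close>-th
  summand vanishes at all roots but \<open>x_i\<close>), and both have degree \<open>< n\<close>, so they coincide.
  Comparing coefficients of \<open>x^{n-1}\<close> gives \<open>b_{n-1,k} = a_n N_k\<close>.\<close>

lemma coeff_synthetic_div_degree_minus_1:
  fixes p :: "'a::comm_ring_1 poly"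
  assumes "degree p \<noteq> 0"
  shows "coeff (synthetic_div p c) (degree p - 1) = lead_coeff p"
proof -
  have "coeff (pCons (poly p c) (synthetic_div p c)) (degree p)
        = coeff (p + smult c (synthetic_div p c)) (degree p)"
    by (simp only: synthetic_div_correct)
  moreover have "coeff (synthetic_div p c) (degree p) = 0"
    using assms by (intro coeff_eq_0) (simp add: degree_synthetic_div)
  ultimately show ?thesis
    using assms by (cases "degree p") auto
qed

lemma poly_synthetic_div_self:
  fixes p :: "'a::idom poly"
  shows "poly (synthetic_div p c) c = poly (pderiv p) c"
proof -
  have "pderiv p = pderiv ([:-c, 1:] * synthetic_div p c + [:poly p c:])"
    by (simp only: synthetic_div_correct')
  also have "\<dots> = [:-c, 1:] * pderiv (synthetic_div p c) + synthetic_div p c"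
    by (simp only: pderiv_add pderiv_mult pderiv_pCons pderiv_0 one_pCons [symmetric]) simp
  finally show ?thesis by simp
qed

lemma poly_synthetic_div_other_root:
  fixes p :: "'a::idom poly"
  assumes "poly p c = 0" "poly p s = 0" "s \<noteq> c"
  shows "poly (synthetic_div p c) s = 0"
proof -
  have "poly p s = (s - c) * poly (synthetic_div p c) s + poly p c"
    by (subst (1) synthetic_div_correct' [of c p, symmetric]) (simp add: algebra_simps)
  then show ?thesis using assms by simp
qed

lemma interpolation_at_simple_roots:
  fixes p f :: "'a::idom poly"
  assumes roots: "card {x. poly p x = 0} = degree p"
    and deg: "degree f < degree p"
    and vals: "\<And>r. poly p r = 0 \<Longrightarrow> poly f r = w r * poly (pderiv p) r"
  shows "f = (\<Sum>r | poly p r = 0. smult (w r) (synthetic_div p r))"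
proof (rule poly_eqI_degree [where A = "{x. poly p x = 0}"])
  have fin: "finite {x. poly p x = 0}"
    using roots deg card.infinite by fastforce
  fix s assume s: "s \<in> {x. poly p x = 0}"
  have "poly (\<Sum>r | poly p r = 0. smult (w r) (synthetic_div p r)) s
        = w s * poly (synthetic_div p s) s"
    using fin s
    by (simp add: poly_sum sum.remove, intro sum.neutral) (auto simp: poly_synthetic_div_other_root)
  then show "poly f s = poly (\<Sum>r | poly p r = 0. smult (w r) (synthetic_div p r)) s"
    using s vals by (simp add: poly_synthetic_div_self)
next
  show "degree f < card {x. poly p x = 0}" using roots deg by simp
  show "degree (\<Sum>r | poly p r = 0. smult (w r) (synthetic_div p r))
        < card {x. poly p x = 0}"
    using roots deg
    by (auto intro!: degree_sum_less le_less_trans [OF degree_smult_le] simp: degree_synthetic_div)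
qed

lemma coeff_interpolation_at_simple_roots:
  fixes p f :: "'a::idom poly"
  assumes "card {x. poly p x = 0} = degree p"
    and "degree f < degree p"
    and "\<And>r. poly p r = 0 \<Longrightarrow> poly f r = w r * poly (pderiv p) r"
  shows "coeff f (degree p - 1) = lead_coeff p * (\<Sum>r | poly p r = 0. w r)"
proof -
  let ?g = "\<Sum>r | poly p r = 0. smult (w r) (synthetic_div p r)"
  have "degree p \<noteq> 0" using assms(2) by simp
  then have "coeff ?g (degree p - 1) = (\<Sum>r | poly p r = 0. w r * lead_coeff p)"
    unfolding coeff_sum coeff_smult
    by (intro sum.cong refl arg_cong [where f = "(*) (w _)"] coeff_synthetic_div_degree_minus_1)
  then show ?thesis
    using interpolation_at_simple_roots [OF assms] by (simp add: sum_distrib_left mult.commute)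
qed

definition bpoly :: "complex poly \<Rightarrow> nat \<Rightarrow> complex poly" where
  "bpoly p k = (\<Sum>j<degree p. monom (bnum p (int j) k) j)"

lemma coeff_bpoly: "coeff (bpoly p k) i = (if i < degree p then bnum p (int i) k else 0)"
  by (simp add: bpoly_def coeff_sum coeff_monom)

lemma degree_bpoly_less: "degree p \<noteq> 0 \<Longrightarrow> degree (bpoly p k) < degree p"
  by (intro degree_lessI) (auto simp: coeff_bpoly)

lemma bnum_minus_one [simp]: "bnum p (-1) k = 0"
  by (cases k) auto

lemma bpoly_0: "bpoly p 0 = pderiv p"
  by (rule poly_eqI) (auto simp: coeff_bpoly coeff_pderiv coeff_eq_0)

lemma bpoly_Suc:
  assumes "p \<noteq> 0"
  shows "bpoly p (Suc k) = pCons 0 (bpoly p k) - smult (bnum p (int (degree p) - 1) k / lead_coeff p) p"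
proof (rule poly_eqI)
  fix i
  show "coeff (bpoly p (Suc k)) i
        = coeff (pCons 0 (bpoly p k) - smult (bnum p (int (degree p) - 1) k / lead_coeff p) p) i"
  proof (cases i "degree p" rule: linorder_cases)
    case less
    then show ?thesis
      by (cases i) (auto simp: coeff_bpoly of_nat_diff nat_add_distrib)
  next
    case equal
    then show ?thesis
      using leading_coeff_neq_0 [OF assms] by (cases "degree p") (simp_all add: coeff_bpoly)
  next
    case greater
    then show ?thesis
      by (cases i) (auto simp: coeff_bpoly coeff_eq_0)
  qed
qed

lemma poly_bpoly_at_root:
  assumes "p \<noteq> 0" "poly p r = 0"
  shows "poly (bpoly p k) r = r ^ k * poly (pderiv p) r"
  by (induction k) (simp_all add: bpoly_0 bpoly_Suc assms)

theorem corollary1: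
  fixes p :: "complex poly" and k :: nat
  assumes "p \<noteq> 0"
    and "card {x. poly p x = 0} = degree p"
    and "k < degree p"
  shows "(\<Sum>x\<in>{x. poly p x = 0}. x ^ k) = bnum p (int (degree p) - 1) k / lead_coeff p"
proof -
  have "bnum p (int (degree p) - 1) k = coeff (bpoly p k) (degree p - 1)"
    using assms(3) by (simp add: coeff_bpoly of_nat_diff)
  also have "\<dots> = lead_coeff p * (\<Sum>x\<in>{x. poly p x = 0}. x ^ k)"
    using assms
    by (intro coeff_interpolation_at_simple_roots degree_bpoly_less poly_bpoly_at_root) auto
  finally show ?thesis
    using assms(1) by simp
qed

end
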